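(* Let $d,r$ be positive integers, let $n=dr$, and let $\alpha\in\mathcal S_n$ have cycle structure $d^r$ (i.e. $r$ disjoint cycles each of length $d$). Then $(\alpha,\alpha,\alpha;(12))\in\mathrm{Par}(n)$ if and only if $d\not\equiv2\pmod 4$.
   Context: A Latin square of order $n$ is an $n\times n$ array with rows, columns and symbols indexed by $[n]$, each symbol occurring once in each row and each column, with triple set $O(L)$. Permutations act on the right. A paratopism $(\alpha,\beta,\gamma;(12))$ maps $L$ to $L^\sigma$ with triple set $\{(y\beta,x\alpha,z\gamma):(x,y,z)\in O(L)\}$; it is an autoparatopism of $L$ if $L^\sigma=L$. $\mathrm{Par}(n)$ is the set of paratopisms that are autoparatopisms of at least one Latin square of order $n$. *)

theory Defs
  imports "HOL-Combinatorics.Permutations"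
begin

text \<open>Latin squares of order n with rows, columns, symbols indexed by {0..<n}
  (a relabelling of [n]). A Latin square is given by its entry function L,
  with triple set O(L) = {(x, y, L x y) | x y < n}.\<close>

definition latin_square :: "nat \<Rightarrow> (nat \<Rightarrow> nat \<Rightarrow> nat) \<Rightarrow> bool" where
  "latin_square n L \<longleftrightarrow>
     (\<forall>x<n. \<forall>y<n. L x y < n) \<and>
     (\<forall>x<n. inj_on (\<lambda>y. L x y) {0..<n}) \<and>
     (\<forall>y<n. inj_on (\<lambda>x. L x y) {0..<n})"

definition triples :: "nat \<Rightarrow> (nat \<Rightarrow> nat \<Rightarrow> nat) \<Rightarrow> (nat \<times> nat \<times> nat) set" where
  "triples n L = {(x, y, L x y) | x y. x < n \<and> y < n}"

text \<open>Image of L under the paratopism (alpha, beta, gamma; (12)): triple set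
  {(y beta, x alpha, z gamma) : (x,y,z) in O(L)}. Permutations act on the right,
  so x alpha is written alpha x.\<close>

definition paratopism12_image ::
  "(nat \<Rightarrow> nat) \<Rightarrow> (nat \<Rightarrow> nat) \<Rightarrow> (nat \<Rightarrow> nat) \<Rightarrow> (nat \<times> nat \<times> nat) set \<Rightarrow> (nat \<times> nat \<times> nat) set" where
  "paratopism12_image \<alpha> \<beta> \<gamma> T = {(\<beta> y, \<alpha> x, \<gamma> z) | x y z. (x, y, z) \<in> T}"

definition autoparatopism12 ::
  "nat \<Rightarrow> (nat \<Rightarrow> nat) \<Rightarrow> (nat \<Rightarrow> nat) \<Rightarrow> (nat \<Rightarrow> nat) \<Rightarrow> (nat \<Rightarrow> nat \<Rightarrow> nat) \<Rightarrow> bool" where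
  "autoparatopism12 n \<alpha> \<beta> \<gamma> L \<longleftrightarrow>
     paratopism12_image \<alpha> \<beta> \<gamma> (triples n L) = triples n L"

definition in_Par12 :: "nat \<Rightarrow> (nat \<Rightarrow> nat) \<Rightarrow> (nat \<Rightarrow> nat) \<Rightarrow> (nat \<Rightarrow> nat) \<Rightarrow> bool" where
  "in_Par12 n \<alpha> \<beta> \<gamma> \<longleftrightarrow>
     (\<exists>L. latin_square n L \<and> autoparatopism12 n \<alpha> \<beta> \<gamma> L)"

text \<open>alpha in S_n has cycle structure d^r: it consists of exactly r disjoint
  cycles, each of length d, i.e. every point of {0..<n} lies on a cycle of
  length exactly d, and (with n = d r) there are r such cycles.\<close>

definition cycle_structure_uniform :: "nat \<Rightarrow> (nat \<Rightarrow> nat) \<Rightarrow> nat \<Rightarrow> nat \<Rightarrow> bool" where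
  "cycle_structure_uniform n \<alpha> d r \<longleftrightarrow>
     \<alpha> permutes {0..<n} \<and> n = d * r \<and>
     (\<forall>x<n. card {(\<alpha> ^^ k) x | k. True} = d)"

end

theory Submission
  imports Defs "HOL-Combinatorics.Orbits" "HOL-Number_Theory.Cong"
begin

(*
  The autoparatopism (\<alpha>, \<alpha>, \<alpha>; (12)) of L is the equation L (\<alpha> y) (\<alpha> x) = \<alpha> (L x y).
  Iterating it an odd number e of times gives L (\<alpha>^e y) (\<alpha>^e x) = \<alpha>^e (L x y). If d = 2 e with
  e odd, put y = \<alpha>^e x: then \<alpha>^e y = x, so \<alpha>^e fixes the symbol L x y, although every
  cycle of \<alpha> has length d > e.

  Conversely, \<alpha> is conjugate to the rotation of each block of d consecutive integers, and
  conjugation transports Latin squares, so it suffices to treat that block rotation. A square for it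
  is the direct product of the symmetric cyclic square of order r with a square A of order d
  satisfying A (y + 1) (x + 1) = A x y + 1 (mod d). Such an A has the form
  A x y = x + h x (y - x) (mod d): for odd d with h t = t / 2, and for 4 dvd d with an offset h x
  that depends on the parity of x.
*)

section \<open>The autoparatopism equation\<close>

definition transpose_equivariant :: "nat \<Rightarrow> (nat \<Rightarrow> nat) \<Rightarrow> (nat \<Rightarrow> nat \<Rightarrow> nat) \<Rightarrow> bool" where
  "transpose_equivariant n f L \<longleftrightarrow> (\<forall>x<n. \<forall>y<n. L (f y) (f x) = f (L x y))"

lemma autoparatopism12_iff:
  assumes \<alpha>: "\<alpha> permutes {0..<n}" and \<beta>: "\<beta> permutes {0..<n}"
  shows "autoparatopism12 n \<alpha> \<beta> \<gamma> L \<longleftrightarrow> (\<forall>x<n. \<forall>y<n. L (\<beta> y) (\<alpha> x) = \<gamma> (L x y))"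
proof
  assume auto: "autoparatopism12 n \<alpha> \<beta> \<gamma> L"
  have "(\<beta> y, \<alpha> x, \<gamma> (L x y)) \<in> triples n L" if "x < n" "y < n" for x y
  proof -
    have "(x, y, L x y) \<in> triples n L" using that by (auto simp: triples_def)
    then have "(\<beta> y, \<alpha> x, \<gamma> (L x y)) \<in> paratopism12_image \<alpha> \<beta> \<gamma> (triples n L)"
      unfolding paratopism12_image_def by blast
    then show ?thesis using auto unfolding autoparatopism12_def by simp
  qed
  then show "\<forall>x<n. \<forall>y<n. L (\<beta> y) (\<alpha> x) = \<gamma> (L x y)"
    unfolding triples_def by auto
next
  assume eqn: "\<forall>x<n. \<forall>y<n. L (\<beta> y) (\<alpha> x) = \<gamma> (L x y)"
  have in_range: "\<alpha> x < n" "\<beta> x < n" if "x < n" for x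
    using that permutes_in_image[OF \<alpha>] permutes_in_image[OF \<beta>] by auto
  have "triples n L \<subseteq> paratopism12_image \<alpha> \<beta> \<gamma> (triples n L)"
  proof
    fix t assume "t \<in> triples n L"
    then obtain x y where "x < n" "y < n" and t: "t = (x, y, L x y)"
      unfolding triples_def by blast
    moreover obtain x' y' where "x' < n" "y' < n" "x = \<beta> y'" "y = \<alpha> x'"
    proof -
      have "x \<in> \<beta> ` {0..<n}" "y \<in> \<alpha> ` {0..<n}"
        using \<open>x < n\<close> \<open>y < n\<close> by (simp_all add: permutes_image[OF \<alpha>] permutes_image[OF \<beta>])
      then show ?thesis using that by auto
    qed
    ultimately show "t \<in> paratopism12_image \<alpha> \<beta> \<gamma> (triples n L)"
      using eqn unfolding paratopism12_image_def triples_def by auto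
  qed
  moreover have "paratopism12_image \<alpha> \<beta> \<gamma> (triples n L) \<subseteq> triples n L"
    using eqn in_range unfolding paratopism12_image_def triples_def by fastforce
  ultimately show "autoparatopism12 n \<alpha> \<beta> \<gamma> L"
    unfolding autoparatopism12_def by blast
qed

lemma in_Par12_iff_transpose_equivariant:
  "\<alpha> permutes {0..<n} \<Longrightarrow> in_Par12 n \<alpha> \<alpha> \<alpha> \<longleftrightarrow> (\<exists>L. latin_square n L \<and> transpose_equivariant n \<alpha> L)"
  unfolding in_Par12_def transpose_equivariant_def by (simp add: autoparatopism12_iff)

section \<open>Isotopes and direct products of Latin squares\<close>

lemma latin_square_less:
  "latin_square n L \<Longrightarrow> x < n \<Longrightarrow> y < n \<Longrightarrow> L x y < n"
  unfolding latin_square_def by blast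

lemma latin_square_row_cancel:
  assumes "latin_square n L" "L x a = L x b" "x < n" "a < n" "b < n"
  shows "a = b"
proof -
  have "inj_on (L x) {0..<n}" using assms(1,3) unfolding latin_square_def by blast
  then show ?thesis using assms(2,4,5) by (auto dest: inj_onD)
qed

lemma latin_square_col_cancel:
  assumes "latin_square n L" "L a y = L b y" "y < n" "a < n" "b < n"
  shows "a = b"
proof -
  have "inj_on (\<lambda>x. L x y) {0..<n}" using assms(1,3) unfolding latin_square_def by blast
  then show ?thesis using assms(2,4,5) by (auto dest: inj_onD)
qed

lemma latin_square_isotope:
  assumes L: "latin_square n L" and f: "bij_betw f {0..<n} {0..<n}"
    and g: "bij_betw g {0..<n} {0..<n}" and h: "bij_betw h {0..<n} {0..<n}"
  shows "latin_square n (\<lambda>x y. h (L (f x) (g y)))"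
proof -
  have range: "f x < n" "g x < n" "h x < n" if "x < n" for x
    using that bij_betw_apply[OF f] bij_betw_apply[OF g] bij_betw_apply[OF h] by auto
  have cancel: "a = b" if "bij_betw k {0..<n} {0..<n}" "k a = k b" "a < n" "b < n" for k a b
    using inj_onD[OF bij_betw_imp_inj_on[OF that(1)] that(2)] that(3,4) by simp
  show ?thesis
    unfolding latin_square_def
  proof (intro conjI allI impI)
    show "h (L (f x) (g y)) < n" if "x < n" "y < n" for x y
      using that range latin_square_less[OF L] by simp
    show "inj_on (\<lambda>y. h (L (f x) (g y))) {0..<n}" if "x < n" for x
    proof (rule inj_onI)
      fix a b assume "a \<in> {0..<n}" "b \<in> {0..<n}" "h (L (f x) (g a)) = h (L (f x) (g b))"
      then have "L (f x) (g a) = L (f x) (g b)"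
        using cancel[OF h] that range latin_square_less[OF L] by simp
      then have "g a = g b"
        using latin_square_row_cancel[OF L] that range \<open>a \<in> _\<close> \<open>b \<in> _\<close> by simp
      then show "a = b" using cancel[OF g] \<open>a \<in> _\<close> \<open>b \<in> _\<close> by simp
    qed
    show "inj_on (\<lambda>x. h (L (f x) (g y))) {0..<n}" if "y < n" for y
    proof (rule inj_onI)
      fix a b assume "a \<in> {0..<n}" "b \<in> {0..<n}" "h (L (f a) (g y)) = h (L (f b) (g y))"
      then have "L (f a) (g y) = L (f b) (g y)"
        using cancel[OF h] that range latin_square_less[OF L] by simp
      then have "f a = f b"
        using latin_square_col_cancel[OF L] that range \<open>a \<in> _\<close> \<open>b \<in> _\<close> by simp
      then show "a = b" using cancel[OF f] \<open>a \<in> _\<close> \<open>b \<in> _\<close> by simp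
    qed
  qed
qed

lemma mixed_radix_eq_iff:
  fixes d q q' w w' :: nat
  assumes "w < d" "w' < d"
  shows "d * q + w = d * q' + w' \<longleftrightarrow> q = q' \<and> w = w'"
proof
  assume "d * q + w = d * q' + w'"
  then have "(d * q + w) div d = (d * q' + w') div d" "(d * q + w) mod d = (d * q' + w') mod d"
    by simp_all
  then show "q = q' \<and> w = w'" using assms by simp
qed simp

lemma mixed_radix_less:
  fixes d q r w :: nat
  assumes "q < r" "w < d"
  shows "d * q + w < d * r"
proof -
  have "d * q + w < d * Suc q" using assms(2) by simp
  also have "\<dots> \<le> d * r" using assms(1) by (intro mult_le_mono2) simp
  finally show ?thesis .
qed

lemma latin_square_product:
  assumes A: "latin_square d A" and B: "latin_square r B"
  shows "latin_square (d * r) (\<lambda>x y. d * B (x div d) (y div d) + A (x mod d) (y mod d))"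
proof (cases "d = 0")
  case False
  have div_less: "x div d < r" if "x \<in> {0..<d * r}" for x
    using that by (simp add: less_mult_imp_div_less mult.commute)
  have mod_less: "x mod d < d" for x using False by simp
  have digits_eq: "B u a' = B u' b' \<and> A v a'' = A v' b''"
    if "d * B u a' + A v a'' = d * B u' b' + A v' b''" "v < d" "a'' < d" "v' < d" "b'' < d"
    for u u' v v' a' b' a'' b''
    using that latin_square_less[OF A] by (simp add: mixed_radix_eq_iff)
  have split_eq: "a = b" if "a div d = b div d" "a mod d = b mod d" for a b :: nat
    using that by (metis div_mult_mod_eq)
  show ?thesis
    unfolding latin_square_def
  proof (intro conjI allI impI)
    show "d * B (x div d) (y div d) + A (x mod d) (y mod d) < d * r" if "x < d * r" "y < d * r" for x y
      using that div_less mod_less latin_square_less[OF A] latin_square_less[OF B]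
      by (simp add: mixed_radix_less)
    show "inj_on (\<lambda>y. d * B (x div d) (y div d) + A (x mod d) (y mod d)) {0..<d * r}"
      if "x < d * r" for x
    proof (rule inj_onI)
      fix a b assume a: "a \<in> {0..<d * r}" and b: "b \<in> {0..<d * r}" and eq:
        "d * B (x div d) (a div d) + A (x mod d) (a mod d) = d * B (x div d) (b div d) + A (x mod d) (b mod d)"
      have x: "x \<in> {0..<d * r}" using that by simp
      have "B (x div d) (a div d) = B (x div d) (b div d)" "A (x mod d) (a mod d) = A (x mod d) (b mod d)"
        using digits_eq[OF eq mod_less mod_less mod_less mod_less] by simp_all
      then show "a = b"
        using latin_square_row_cancel[OF B _ div_less[OF x] div_less[OF a] div_less[OF b]]
          latin_square_row_cancel[OF A _ mod_less mod_less mod_less] split_eq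
        by blast
    qed
    show "inj_on (\<lambda>x. d * B (x div d) (y div d) + A (x mod d) (y mod d)) {0..<d * r}"
      if "y < d * r" for y
    proof (rule inj_onI)
      fix a b assume a: "a \<in> {0..<d * r}" and b: "b \<in> {0..<d * r}" and eq:
        "d * B (a div d) (y div d) + A (a mod d) (y mod d) = d * B (b div d) (y div d) + A (b mod d) (y mod d)"
      have y: "y \<in> {0..<d * r}" using that by simp
      have "B (a div d) (y div d) = B (b div d) (y div d)" "A (a mod d) (y mod d) = A (b mod d) (y mod d)"
        using digits_eq[OF eq mod_less mod_less mod_less mod_less] by simp_all
      then show "a = b"
        using latin_square_col_cancel[OF B _ div_less[OF y] div_less[OF a] div_less[OF b]]
          latin_square_col_cancel[OF A _ mod_less mod_less mod_less] split_eq
        by blast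
    qed
  qed
qed (simp add: latin_square_def)

lemma latin_square_cyclic: "latin_square r (\<lambda>x y. (x + y) mod r)"
  unfolding latin_square_def inj_on_def
  by (auto simp: cong_add_lcancel_nat cong_add_rcancel_nat intro: cong_less_modulus_unique_nat
      simp flip: cong_def)

lemma transpose_equivariant_conjugate:
  assumes L: "latin_square n L" "transpose_equivariant n \<phi> L" and \<phi>: "\<forall>y<n. \<phi> y < n"
    and c: "bij_betw c {0..<n} {0..<n}" and conj: "\<forall>y<n. c (\<phi> y) = \<alpha> (c y)"
  shows "\<exists>L'. latin_square n L' \<and> transpose_equivariant n \<alpha> L'"
proof (intro exI conjI)
  define c' where "c' = inv_into {0..<n} c"
  have c': "bij_betw c' {0..<n} {0..<n}" unfolding c'_def by (rule bij_betw_inv_into[OF c])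
  have c_c': "c (c' x) = x" if "x < n" for x
    using bij_betw_inv_into_right[OF c] that by (simp add: c'_def)
  have c'_c: "c' (c x) = x" if "x < n" for x
    using bij_betw_inv_into_left[OF c] that by (simp add: c'_def)
  have c'_range: "c' x < n" if "x < n" for x using bij_betw_apply[OF c'] that by simp
  have \<alpha>_eq: "\<alpha> x = c (\<phi> (c' x))" if "x < n" for x
    using conj c_c' c'_range that by metis
  show "latin_square n (\<lambda>x y. c (L (c' x) (c' y)))"
    by (rule latin_square_isotope[OF L(1) c' c' c])
  show "transpose_equivariant n \<alpha> (\<lambda>x y. c (L (c' x) (c' y)))"
    unfolding transpose_equivariant_def
  proof (intro allI impI)
    fix x y assume "x < n" "y < n"
    then have "c (L (c' (\<alpha> y)) (c' (\<alpha> x))) = c (L (\<phi> (c' y)) (\<phi> (c' x)))"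
      using \<alpha>_eq c'_c \<phi> c'_range by simp
    also have "\<dots> = c (\<phi> (L (c' x) (c' y)))"
      using L(2) c'_range \<open>x < n\<close> \<open>y < n\<close> unfolding transpose_equivariant_def by simp
    also have "\<dots> = \<alpha> (c (L (c' x) (c' y)))"
      using conj latin_square_less[OF L(1)] c'_range \<open>x < n\<close> \<open>y < n\<close> by simp
    finally show "c (L (c' (\<alpha> y)) (c' (\<alpha> x))) = \<alpha> (c (L (c' x) (c' y)))" .
  qed
qed

lemma transpose_equivariant_product:
  assumes A: "latin_square d A" "transpose_equivariant d f A" and f: "\<forall>x<d. f x < d"
    and B: "transpose_equivariant r g B"
  shows "transpose_equivariant (d * r) (\<lambda>z. d * g (z div d) + f (z mod d))
           (\<lambda>x y. d * B (x div d) (y div d) + A (x mod d) (y mod d))"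
  unfolding transpose_equivariant_def
proof (intro allI impI)
  fix x y assume "x < d * r" "y < d * r"
  then have "0 < d" by (cases "d = 0") auto
  have div_less: "x div d < r" "y div d < r"
    using \<open>x < d * r\<close> \<open>y < d * r\<close> by (auto simp: less_mult_imp_div_less mult.commute)
  have mod_less: "x mod d < d" "y mod d < d" using \<open>0 < d\<close> by simp_all
  have digits: "(d * q + w) div d = q" "(d * q + w) mod d = w" if "w < d" for q w
    using that by auto
  show "d * B ((d * g (y div d) + f (y mod d)) div d) ((d * g (x div d) + f (x mod d)) div d) +
        A ((d * g (y div d) + f (y mod d)) mod d) ((d * g (x div d) + f (x mod d)) mod d) =
        d * g ((d * B (x div d) (y div d) + A (x mod d) (y mod d)) div d) +
        f ((d * B (x div d) (y div d) + A (x mod d) (y mod d)) mod d)"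
    using A B f div_less mod_less latin_square_less[OF A(1)]
    by (simp add: digits transpose_equivariant_def)
qed

lemma transpose_equivariant_cyclic: "transpose_equivariant r (\<lambda>q. q) (\<lambda>x y. (x + y) mod r)"
  by (simp add: transpose_equivariant_def add.commute)

section \<open>Permutations whose cycles all have length \<open>d\<close>\<close>

lemma card_orbit_eq_funpow_dist1:
  assumes "permutation f"
  shows "card (orbit f x) = funpow_dist1 f x x"
proof -
  have x: "x \<in> orbit f x" using assms by (rule permutation_self_in_orbit)
  show ?thesis
    using card_image[OF inj_on_funpow_dist1[OF x]] by (simp add: orbit_conv_funpow_dist1[OF x])
qed

lemma funpow_dist1_self_le:
  assumes "(f ^^ m) x = x" "0 < m"
  shows "funpow_dist1 f x x \<le> m"
proof -
  have "x \<in> orbit f x" using assms unfolding orbit_altdef by (auto intro!: exI[of _ m])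
  then show ?thesis using funpow_dist1_le_self[OF assms] by blast
qed

lemma orbit_eq_if_mem:
  "permutation f \<Longrightarrow> y \<in> orbit f x \<Longrightarrow> orbit f y = orbit f x"
  by (rule orbit_cyclic_eq3[OF cyclic_on_orbit'])

lemma card_orbits_uniform:
  assumes \<alpha>: "\<alpha> permutes S" and S: "finite S" and period: "\<forall>x\<in>S. funpow_dist1 \<alpha> x x = d"
  shows "d * card (orbit \<alpha> ` S) = card S"
proof -
  have perm: "permutation \<alpha>" using S \<alpha> by (rule permutes_imp_permutation)
  have "\<Union> (orbit \<alpha> ` S) = S"
    using permutes_orbit_subset[OF \<alpha>] permutation_self_in_orbit[OF perm] by blast
  moreover have "d * card (orbit \<alpha> ` S) = card (\<Union> (orbit \<alpha> ` S))"
  proof (rule card_partition)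
    show "finite (orbit \<alpha> ` S)" "finite (\<Union> (orbit \<alpha> ` S))"
      using S permutes_orbit_subset[OF \<alpha>] by (auto intro: finite_subset)
    show "\<And>c. c \<in> orbit \<alpha> ` S \<Longrightarrow> card c = d"
      using period card_orbit_eq_funpow_dist1[OF perm] by auto
    show "\<And>c1 c2. c1 \<in> orbit \<alpha> ` S \<Longrightarrow> c2 \<in> orbit \<alpha> ` S \<Longrightarrow> c1 \<noteq> c2 \<Longrightarrow> c1 \<inter> c2 = {}"
      using orbit_eq_if_mem[OF perm] by blast
  qed
  ultimately show ?thesis by simp
qed

lemma image_enumeration_representatives:
  assumes "finite S"
  obtains rep where "bij_betw (\<lambda>i. g (rep i)) {0..<card (g ` S)} (g ` S)"
    and "rep ` {0..<card (g ` S)} \<subseteq> S"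
proof -
  obtain e where e: "bij_betw e {0..<card (g ` S)} (g ` S)"
    using ex_bij_betw_nat_finite[of "g ` S"] assms by blast
  define rep where "rep i = (SOME x. x \<in> S \<and> e i = g x)" for i
  have rep: "rep i \<in> S \<and> e i = g (rep i)" if "i \<in> {0..<card (g ` S)}" for i
  proof -
    have "\<exists>x. x \<in> S \<and> e i = g x" using bij_betw_apply[OF e that] by auto
    then show ?thesis unfolding rep_def by (rule someI_ex)
  qed
  have "bij_betw (\<lambda>i. g (rep i)) {0..<card (g ` S)} (g ` S)"
    using e by (rule bij_betw_cong[THEN iffD1, rotated]) (simp add: rep)
  moreover have "rep ` {0..<card (g ` S)} \<subseteq> S" using rep by blast
  ultimately show thesis by (rule that)
qed

definition block_rotation :: "nat \<Rightarrow> nat \<Rightarrow> nat" where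
  "block_rotation d z = d * (z div d) + (z mod d + 1) mod d"

lemma block_rotation_less: "z < d * r \<Longrightarrow> block_rotation d z < d * r"
  by (cases "d = 0") (auto simp: block_rotation_def less_mult_imp_div_less mult.commute intro: mixed_radix_less)

lemma uniform_cycles_conjugate_block_rotation:
  assumes \<alpha>: "\<alpha> permutes S" and S: "finite S" and period: "\<forall>x\<in>S. funpow_dist1 \<alpha> x x = d"
  shows "\<exists>c. bij_betw c {0..<card S} S \<and> (\<forall>y<card S. c (block_rotation d y) = \<alpha> (c y))"
proof -
  have perm: "permutation \<alpha>" using S \<alpha> by (rule permutes_imp_permutation)
  have self: "x \<in> orbit \<alpha> x" for x using perm by (rule permutation_self_in_orbit)
  define m where "m = card (orbit \<alpha> ` S)"
  obtain rep where rep: "bij_betw (\<lambda>i. orbit \<alpha> (rep i)) {0..<m} (orbit \<alpha> ` S)" "rep ` {0..<m} \<subseteq> S"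
    unfolding m_def using image_enumeration_representatives[OF S] .
  have card_S: "card S = d * m" unfolding m_def using card_orbits_uniform[OF \<alpha> S period] by simp
  define c where "c y = (\<alpha> ^^ (y mod d)) (rep (y div d))" for y
  have div_less: "y div d < m" and d_pos: "0 < d" if "y < card S" for y
    using that card_S by (auto simp: less_mult_imp_div_less mult.commute intro: Nat.gr0I)
  have rep_S: "rep (y div d) \<in> S" if "y < card S" for y using rep(2) div_less[OF that] by auto
  have inj: "inj_on c {0..<card S}"
  proof (rule inj_onI)
    fix y1 y2 assume y: "y1 \<in> {0..<card S}" "y2 \<in> {0..<card S}" "c y1 = c y2"
    have "orbit \<alpha> (c y) = orbit \<alpha> (rep (y div d))" for y
      unfolding c_def by (rule orbit_eq_if_mem[OF perm funpow_in_orbit[OF self]])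
    then have "orbit \<alpha> (rep (y1 div d)) = orbit \<alpha> (rep (y2 div d))" using y(3) by metis
    then have div_eq: "y1 div d = y2 div d"
      using bij_betw_imp_inj_on[OF rep(1)] div_less y by (auto dest: inj_onD)
    let ?x = "rep (y1 div d)"
    have "funpow_dist1 \<alpha> ?x ?x = d" using period rep_S y by auto
    then have "inj_on (\<lambda>k. (\<alpha> ^^ k) ?x) {0..<d}" using inj_on_funpow_dist1[OF self, of ?x] by simp
    moreover have "(\<alpha> ^^ (y1 mod d)) ?x = (\<alpha> ^^ (y2 mod d)) ?x" using y(3) div_eq by (simp add: c_def)
    ultimately have "y1 mod d = y2 mod d" using d_pos y by (auto dest: inj_onD)
    with div_eq show "y1 = y2" by (metis div_mult_mod_eq)
  qed
  moreover have "c ` {0..<card S} \<subseteq> S"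
    unfolding c_def using rep_S by (auto intro: permutes_in_funpow_image[OF \<alpha>])
  then have "c ` {0..<card S} = S"
    using inj S by (intro card_subset_eq) (auto simp: card_image)
  moreover have "c (block_rotation d y) = \<alpha> (c y)" if "y < card S" for y
  proof -
    have "(\<alpha> ^^ d) (rep (y div d)) = rep (y div d)"
      using period rep_S[OF that] funpow_dist1_prop[OF self] by metis
    then have "(\<alpha> ^^ ((y mod d + 1) mod d)) (rep (y div d)) = (\<alpha> ^^ (y mod d + 1)) (rep (y div d))"
      by (rule funpow_mod_eq)
    then show ?thesis using d_pos[OF that] by (simp add: c_def block_rotation_def)
  qed
  ultimately show ?thesis by (auto simp: bij_betw_def)
qed

section \<open>Odd powers of the autoparatopism\<close>

lemma transpose_equivariant_funpow_odd:
  assumes L: "transpose_equivariant n f L" and f: "f permutes {0..<n}"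
    and "x < n" "y < n" "odd m"
  shows "L ((f ^^ m) y) ((f ^^ m) x) = (f ^^ m) (L x y)"
proof -
  have closed: "(f ^^ m) z < n" if "z < n" for m z
    using permutes_in_funpow_image[OF f, of z m] that by simp
  have step: "L (f u) (f v) = f (L v u)" if "u < n" "v < n" for u v
    using L that unfolding transpose_equivariant_def by blast
  have even: "L ((f ^^ (2 * i)) x) ((f ^^ (2 * i)) y) = (f ^^ (2 * i)) (L x y)" for i
  proof (induction i)
    case (Suc i)
    let ?x = "(f ^^ (2 * i)) x" and ?y = "(f ^^ (2 * i)) y"
    have "L ((f ^^ (2 * Suc i)) x) ((f ^^ (2 * Suc i)) y) = L (f (f ?x)) (f (f ?y))"
      by simp
    also have "\<dots> = f (f (L ?x ?y))"
      using step closed \<open>x < n\<close> \<open>y < n\<close> permutes_in_image[OF f] by simp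
    finally show ?case using Suc.IH by simp
  qed simp
  show ?thesis
    using step[of "(f ^^ (m - 1)) y" "(f ^^ (m - 1)) x"] closed \<open>x < n\<close> \<open>y < n\<close> even \<open>odd m\<close>
    by (auto elim!: oddE)
qed

lemma not_transpose_equivariant_if_period_2_mod_4:
  assumes \<alpha>: "\<alpha> permutes {0..<n}" and "0 < n"
    and period: "\<forall>x<n. funpow_dist1 \<alpha> x x = d" and d: "d mod 4 = 2"
    and L: "latin_square n L"
  shows "\<not> transpose_equivariant n \<alpha> L"
proof
  assume equiv: "transpose_equivariant n \<alpha> L"
  define e where "e = d div 2"
  have d_eq: "d = 2 * e" and "odd e" unfolding e_def using d by presburger+
  have perm: "permutation \<alpha>" using \<alpha> by (auto intro: permutes_imp_permutation)
  have closed: "(\<alpha> ^^ m) z < n" if "z < n" for m z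
    using permutes_in_funpow_image[OF \<alpha>, of z m] that by simp
  define y where "y = (\<alpha> ^^ e) 0"
  have "(\<alpha> ^^ e) y = (\<alpha> ^^ funpow_dist1 \<alpha> 0 0) 0"
    using period \<open>0 < n\<close> by (simp add: y_def d_eq mult_2 funpow_add)
  also have "\<dots> = 0"
    by (rule funpow_dist1_prop) (rule permutation_self_in_orbit[OF perm])
  finally have "(\<alpha> ^^ e) y = 0" .
  have "y < n" using closed \<open>0 < n\<close> by (simp add: y_def)
  have "(\<alpha> ^^ e) (L 0 y) = L ((\<alpha> ^^ e) y) ((\<alpha> ^^ e) 0)"
    using transpose_equivariant_funpow_odd[OF equiv \<alpha> \<open>0 < n\<close> \<open>y < n\<close> \<open>odd e\<close>] by simp
  also have "\<dots> = L 0 y" using \<open>(\<alpha> ^^ e) y = 0\<close> by (simp add: y_def)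
  finally have "(\<alpha> ^^ e) (L 0 y) = L 0 y" .
  then have "funpow_dist1 \<alpha> (L 0 y) (L 0 y) \<le> e"
    using \<open>odd e\<close> by (intro funpow_dist1_self_le) (auto intro: odd_pos)
  moreover have "funpow_dist1 \<alpha> (L 0 y) (L 0 y) = d"
    using period latin_square_less[OF L \<open>0 < n\<close> \<open>y < n\<close>] by simp
  ultimately show False using d_eq \<open>odd e\<close> by presburger
qed

section \<open>Latin squares given by offsets\<close>

lemma cong_less_modulus_unique_int:
  fixes a b D :: int
  assumes "[a = b] (mod D)" "0 \<le> a" "a < D" "0 \<le> b" "b < D"
  shows "a = b"
  using assms by (simp add: cong_def)

lemma even_mod_even_modulus:
  fixes a D :: int
  assumes "even D"
  shows "even (a mod D) \<longleftrightarrow> even a"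
  using assms by (metis dvd_mod_iff)

lemma mod_add_cancel_inj_on:
  fixes a t1 t2 D :: int
  assumes "(a + f t1) mod D = (a + f t2) mod D"
    and "inj_on f {0..<D}" "f ` {0..<D} \<subseteq> {0..<D}" "t1 \<in> {0..<D}" "t2 \<in> {0..<D}"
  shows "t1 = t2"
proof -
  have "[f t1 = f t2] (mod D)"
    using assms(1) cong_add_lcancel[of a "f t1" "f t2" D] by (simp add: cong_def)
  moreover have "f t1 \<in> {0..<D}" "f t2 \<in> {0..<D}" using assms(3-5) by (auto simp: image_subset_iff)
  ultimately have "f t1 = f t2" by (auto intro: cong_less_modulus_unique_int)
  then show "t1 = t2" using assms(2,4,5) by (auto dest: inj_onD)
qed

lemma mod_diff_cancel_int:
  fixes u v b D :: int
  assumes "u \<in> {0..<D}" "v \<in> {0..<D}"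
  shows "(u - b) mod D = (v - b) mod D \<Longrightarrow> u = v" and "(b - u) mod D = (b - v) mod D \<Longrightarrow> u = v"
  using assms
  by (auto simp flip: cong_def simp: cong_iff_dvd_diff dvd_diff_commute intro: cong_less_modulus_unique_int)

definition offset_square :: "int \<Rightarrow> (int \<Rightarrow> int \<Rightarrow> int) \<Rightarrow> nat \<Rightarrow> nat \<Rightarrow> nat" where
  "offset_square D h x y = nat ((int x + h (int x) ((int y - int x) mod D)) mod D)"

lemma int_offset_square:
  "0 < D \<Longrightarrow> int (offset_square D h x y) = (int x + h (int x) ((int y - int x) mod D)) mod D"
  by (simp add: offset_square_def)

(* Rows are Latin because every h x is injective; columns because the same square can be read
   as y + k y (y - x). *)
lemma latin_square_offset_square:
  fixes D :: int and h k :: "int \<Rightarrow> int \<Rightarrow> int"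
  assumes D: "0 < D"
    and h_inj: "\<And>x. inj_on (h x) {0..<D}" and h_range: "\<And>x. h x ` {0..<D} \<subseteq> {0..<D}"
    and k_inj: "\<And>y. inj_on (k y) {0..<D}" and k_range: "\<And>y. k y ` {0..<D} \<subseteq> {0..<D}"
    and h_k: "\<And>x y. [x + h x ((y - x) mod D) = y + k y ((y - x) mod D)] (mod D)"
  shows "latin_square (nat D) (offset_square D h)"
proof -
  have col_form: "int (offset_square D h x y) = (int y + k (int y) ((int y - int x) mod D)) mod D" for x y
    using h_k[of "int x" "int y"] D by (simp add: int_offset_square cong_def)
  show ?thesis
    unfolding latin_square_def
  proof (intro conjI allI impI)
    show "offset_square D h x y < nat D" for x y
      using D by (simp add: offset_square_def nat_less_eq_zless)
    show "inj_on (offset_square D h x) {0..<nat D}" for x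
    proof (rule inj_onI)
      fix a b assume "a \<in> {0..<nat D}" "b \<in> {0..<nat D}" "offset_square D h x a = offset_square D h x b"
      then have "(int x + h (int x) ((int a - int x) mod D)) mod D
          = (int x + h (int x) ((int b - int x) mod D)) mod D"
        using int_offset_square[OF D] by metis
      then have "(int a - int x) mod D = (int b - int x) mod D"
        by (rule mod_add_cancel_inj_on[OF _ h_inj h_range]) (use D in auto)
      then show "a = b"
        using mod_diff_cancel_int(1)[of "int a" D "int b"] \<open>a \<in> _\<close> \<open>b \<in> _\<close> by simp
    qed
    show "inj_on (\<lambda>x. offset_square D h x y) {0..<nat D}" for y
    proof (rule inj_onI)
      fix a b assume "a \<in> {0..<nat D}" "b \<in> {0..<nat D}" "offset_square D h a y = offset_square D h b y"
      then have "(int y + k (int y) ((int y - int a) mod D)) mod D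
          = (int y + k (int y) ((int y - int b) mod D)) mod D"
        by (metis col_form)
      then have "(int y - int a) mod D = (int y - int b) mod D"
        by (rule mod_add_cancel_inj_on[OF _ k_inj k_range]) (use D in auto)
      then show "a = b"
        using mod_diff_cancel_int(2)[of "int a" D "int b"] \<open>a \<in> _\<close> \<open>b \<in> _\<close> by simp
    qed
  qed
qed

lemma transpose_equivariant_offset_square:
  fixes D :: int and h :: "int \<Rightarrow> int \<Rightarrow> int"
  assumes D: "0 < D"
    and shift: "\<And>x y. 0 \<le> x \<Longrightarrow> x < D \<Longrightarrow> 0 \<le> y \<Longrightarrow> y < D \<Longrightarrow>
      [h ((y + 1) mod D) ((x - y) mod D) = h x ((y - x) mod D) - (y - x)] (mod D)"
  shows "transpose_equivariant (nat D) (\<lambda>z. (z + 1) mod nat D) (offset_square D h)"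
  unfolding transpose_equivariant_def
proof (intro allI impI)
  fix x y assume "x < nat D" "y < nat D"
  have succ: "int ((z + 1) mod nat D) = (int z + 1) mod D" for z
    using D by (simp add: of_nat_mod add.commute)
  let ?X = "(int x + 1) mod D" and ?Y = "(int y + 1) mod D"
  have "[?Y + h ?Y ((int x - int y) mod D) = int y + 1 + (h (int x) ((int y - int x) mod D) - (int y - int x))] (mod D)"
    using shift[of "int x" "int y"] \<open>x < nat D\<close> \<open>y < nat D\<close>
    by (intro cong_add) (auto simp: cong_def)
  then have step: "[?Y + h ?Y ((int x - int y) mod D) = int x + h (int x) ((int y - int x) mod D) + 1] (mod D)"
    by (simp add: algebra_simps)
  have "int (offset_square D h ((y + 1) mod nat D) ((x + 1) mod nat D)) = (?Y + h ?Y ((?X - ?Y) mod D)) mod D"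
    by (simp only: int_offset_square[OF D] succ)
  also have "\<dots> = (?Y + h ?Y ((int x - int y) mod D)) mod D"
    by (simp add: mod_diff_eq)
  also have "\<dots> = (int (offset_square D h x y) + 1) mod D"
    using step by (simp add: int_offset_square[OF D] cong_def mod_add_left_eq)
  also have "\<dots> = int ((offset_square D h x y + 1) mod nat D)"
    by (simp only: succ)
  finally show "offset_square D h ((y + 1) mod nat D) ((x + 1) mod nat D) = (offset_square D h x y + 1) mod nat D"
    by (simp only: of_nat_eq_iff)
qed

lemma inj_on_mult_mod:
  fixes c D :: int
  assumes "coprime c D"
  shows "inj_on (\<lambda>t. (t * c) mod D) {0..<D}"
proof (rule inj_onI)
  fix t1 t2 assume t: "t1 \<in> {0..<D}" "t2 \<in> {0..<D}" "(t1 * c) mod D = (t2 * c) mod D"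
  then have "[t1 = t2] (mod D)" using assms by (simp add: cong_def[symmetric] cong_mult_rcancel)
  then show "t1 = t2" using t by (auto intro: cong_less_modulus_unique_int)
qed

lemma cyclic_shift_square_odd:
  assumes "odd d"
  shows "\<exists>A. latin_square d A \<and> transpose_equivariant d (\<lambda>z. (z + 1) mod d) A"
proof -
  define D where "D = int d"
  define c where "c = (D + 1) div 2"
  \<comment> \<open>\<open>c\<close> is the inverse of 2 modulo \<open>d\<close>, so the square is \<open>x + (y - x) / 2 = (x + y) / 2\<close>.\<close>
  have D: "0 < D" using assms by (auto simp: D_def intro: odd_pos)
  have two_c: "2 * c = D + 1" using assms unfolding c_def D_def by (auto elim!: oddE)
  have "coprime (2 * c) D" by (simp add: two_c)
  then have "coprime c D" "coprime (- c) D" by simp_all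
  let ?A = "offset_square D (\<lambda>x t. (t * c) mod D)"
  have "latin_square (nat D) ?A"
  proof (rule latin_square_offset_square[where k = "\<lambda>y t. (t * - c) mod D"])
    show "[x + ((y - x) mod D * c) mod D = y + ((y - x) mod D * - c) mod D] (mod D)" for x y
    proof -
      define t where "t = (y - x) mod D"
      have "y - x = t + D * ((y - x) div D)" by (simp add: t_def)
      then have "x + t * c = y - t * c + D * (t - (y - x) div D)"
        using two_c by algebra
      then have "(x + t * c) mod D = (y - t * c) mod D" by (metis mod_mult_self2)
      then show ?thesis by (simp add: cong_def mod_simps flip: t_def)
    qed
  qed (use D inj_on_mult_mod[OF \<open>coprime c D\<close>] inj_on_mult_mod[OF \<open>coprime (- c) D\<close>] in auto)
  moreover have "transpose_equivariant (nat D) (\<lambda>z. (z + 1) mod nat D) ?A"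
  proof (rule transpose_equivariant_offset_square[OF D])
    show "[((x - y) mod D * c) mod D = ((y - x) mod D * c) mod D - (y - x)] (mod D)" for x y
    proof -
      define t t' where "t = (y - x) mod D" and "t' = (x - y) mod D"
      have "y - x = t + D * ((y - x) div D)" "x - y = t' + D * ((x - y) div D)"
        by (simp_all add: t_def t'_def)
      then have "t * c - (y - x) = t' * c + D * (((x - y) div D - (y - x) div D) * c + (y - x))"
        using two_c by algebra
      then show ?thesis by (simp add: cong_def mod_simps flip: t_def t'_def)
    qed
  qed
  ultimately show ?thesis by (auto simp: D_def)
qed

(* A cyclic group of even order has no orthomorphism, so for d = 4 K the offset cannot be the
   same in every row; it depends on the parity of the row. Offsets t = 2 u and t = 2 u + 1 are
   treated separately, and half_shift K is u \<mapsto> u + K (mod 2 K) on [0, 2 K). *)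
definition half_shift :: "int \<Rightarrow> int \<Rightarrow> int" where
  "half_shift K u = (if u < K then u + K else u - K)"

definition row_offset :: "int \<Rightarrow> bool \<Rightarrow> int \<Rightarrow> int" where
  "row_offset K b t =
     (if even t then (if b then t div 2 else if t = 0 then 0 else 2 * K + t div 2)
      else (if b then 2 * K else 1) + half_shift K (t div 2))"

definition col_offset :: "int \<Rightarrow> bool \<Rightarrow> int \<Rightarrow> int" where
  "col_offset K b t =
     (if even t then (if t = 0 then 0 else (if b then 4 * K else 2 * K) - t div 2)
      else (if b then 2 * K else 4 * K - 1) - half_shift K (t div 2))"

lemma row_offset_range: "row_offset K b ` {0..<4 * K} \<subseteq> {0..<4 * K}"
  by (auto simp: row_offset_def half_shift_def elim!: evenE oddE)

lemma col_offset_range: "col_offset K b ` {0..<4 * K} \<subseteq> {0..<4 * K}"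
  by (auto simp: col_offset_def half_shift_def elim!: evenE oddE)

lemma inj_on_row_offset: "inj_on (row_offset K b) {0..<4 * K}"
  by (rule inj_onI) (auto simp: row_offset_def half_shift_def split: if_splits elim!: evenE oddE)

lemma inj_on_col_offset: "inj_on (col_offset K b) {0..<4 * K}"
  by (rule inj_onI) (auto simp: col_offset_def half_shift_def split: if_splits elim!: evenE oddE)

lemma row_col_offset_cong:
  assumes "0 \<le> t" "t < 4 * K"
  shows "[row_offset K (b = even t) t - t = col_offset K b t] (mod 4 * K)"
  using assms by (auto simp: row_offset_def col_offset_def half_shift_def cong_iff_dvd_diff elim!: evenE oddE)

lemma row_offset_reflect_cong:
  assumes "0 \<le> t" "t < 4 * K"
  shows "[row_offset K b t - t = row_offset K (b \<noteq> even t) ((- t) mod (4 * K))] (mod 4 * K)"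
proof -
  have reflect: "(- t) mod (4 * K) = 4 * K - t" if "t \<noteq> 0"
    using assms that by (simp add: zmod_zminus1_eq_if)
  show ?thesis
  proof (cases "even t")
    case True
    then obtain u where t: "t = 2 * u" by (rule evenE)
    show ?thesis
    proof (cases "u = 0")
      case False
      then have "(- t) mod (4 * K) = 2 * (2 * K - u)"
        using reflect t by simp
      then show ?thesis
        using assms t False by (auto simp: row_offset_def half_shift_def cong_iff_dvd_diff)
    qed (simp add: row_offset_def t)
  next
    case False
    then have "t \<noteq> 0" by auto
    obtain u where t: "t = 2 * u + 1" using False by (rule oddE)
    define v where "v = 2 * K - u - 1"
    have "(- t) mod (4 * K) = 2 * v + 1" "u + v = 2 * K - 1"
      using reflect[OF \<open>t \<noteq> 0\<close>] t by (simp_all add: v_def)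
    then show ?thesis
      using assms t by (auto simp: row_offset_def half_shift_def cong_iff_dvd_diff) (simp_all add: v_def)
  qed
qed

lemma row_offset_col_offset_cong:
  assumes "0 < K"
  shows "[x + row_offset K (even x) ((y - x) mod (4 * K))
    = y + col_offset K (even y) ((y - x) mod (4 * K))] (mod 4 * K)"
proof -
  define t where "t = (y - x) mod (4 * K)"
  have "even x \<longleftrightarrow> (even y \<longleftrightarrow> even t)"
    using even_mod_even_modulus[of "4 * K" "y - x"] by (auto simp: t_def)
  then have "[row_offset K (even x) t - t = col_offset K (even y) t] (mod 4 * K)"
    using row_col_offset_cong[of t K "even y"] assms by (simp add: t_def)
  moreover have "[t = y - x] (mod 4 * K)" by (simp add: t_def cong_def)
  ultimately have "[x + (row_offset K (even x) t - t) + t = x + col_offset K (even y) t + (y - x)] (mod 4 * K)"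
    by (intro cong_add cong_refl)
  then show ?thesis by (simp add: t_def algebra_simps)
qed

lemma row_offset_succ_cong:
  assumes "0 < K"
  shows "[row_offset K (even ((y + 1) mod (4 * K))) ((x - y) mod (4 * K))
    = row_offset K (even x) ((y - x) mod (4 * K)) - (y - x)] (mod 4 * K)"
proof -
  define t where "t = (y - x) mod (4 * K)"
  have "even ((y + 1) mod (4 * K)) \<longleftrightarrow> (even x \<noteq> even t)"
    using even_mod_even_modulus[of "4 * K" "y + 1"] even_mod_even_modulus[of "4 * K" "y - x"]
    by (auto simp: t_def)
  moreover have "(x - y) mod (4 * K) = (- t) mod (4 * K)"
    by (simp add: t_def mod_minus_eq)
  ultimately have "[row_offset K (even ((y + 1) mod (4 * K))) ((x - y) mod (4 * K))
      = row_offset K (even x) t - t] (mod 4 * K)"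
    using row_offset_reflect_cong[of t K "even x"] assms by (simp add: t_def cong_sym_eq)
  also have "[row_offset K (even x) t - t = row_offset K (even x) t - (y - x)] (mod 4 * K)"
    by (intro cong_diff cong_refl) (simp add: t_def cong_def)
  finally show ?thesis by (simp add: t_def)
qed

lemma cyclic_shift_square_4_dvd:
  assumes "0 < d" "4 dvd d"
  shows "\<exists>A. latin_square d A \<and> transpose_equivariant d (\<lambda>z. (z + 1) mod d) A"
proof -
  define K where "K = int d div 4"
  have d_eq: "d = nat (4 * K)" and "0 < K"
    using assms by (auto simp: K_def)
  let ?A = "offset_square (4 * K) (\<lambda>x. row_offset K (even x))"
  have "latin_square (nat (4 * K)) ?A"
    by (rule latin_square_offset_square[where k = "\<lambda>y. col_offset K (even y)"])
      (use \<open>0 < K\<close> inj_on_row_offset inj_on_col_offset row_offset_range col_offset_range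
        row_offset_col_offset_cong in auto)
  moreover have "transpose_equivariant (nat (4 * K)) (\<lambda>z. (z + 1) mod nat (4 * K)) ?A"
    by (rule transpose_equivariant_offset_square) (use \<open>0 < K\<close> row_offset_succ_cong in auto)
  ultimately show ?thesis by (auto simp: d_eq)
qed

lemma cyclic_shift_square_exists:
  assumes "0 < d" "d mod 4 \<noteq> 2"
  shows "\<exists>A. latin_square d A \<and> transpose_equivariant d (\<lambda>z. (z + 1) mod d) A"
proof (cases "odd d")
  case False
  with assms have "4 dvd d" by presburger
  with assms(1) show ?thesis by (rule cyclic_shift_square_4_dvd)
qed (rule cyclic_shift_square_odd)

lemma block_rotation_square_exists:
  assumes "0 < d" "d mod 4 \<noteq> 2"
  shows "\<exists>L. latin_square (d * r) L \<and> transpose_equivariant (d * r) (block_rotation d) L"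
proof -
  obtain A where A: "latin_square d A" "transpose_equivariant d (\<lambda>z. (z + 1) mod d) A"
    using cyclic_shift_square_exists[OF assms] by blast
  have "\<forall>x<d. (x + 1) mod d < d" using assms(1) by simp
  show ?thesis
  proof (intro exI conjI)
    show "latin_square (d * r) (\<lambda>x y. d * ((x div d + y div d) mod r) + A (x mod d) (y mod d))"
      using latin_square_product[OF A(1) latin_square_cyclic] .
    show "transpose_equivariant (d * r) (block_rotation d)
        (\<lambda>x y. d * ((x div d + y div d) mod r) + A (x mod d) (y mod d))"
      unfolding block_rotation_def[abs_def]
      using transpose_equivariant_product[OF A \<open>\<forall>x<d. (x + 1) mod d < d\<close> transpose_equivariant_cyclic] .
  qed
qed

lemma in_Par12_if_uniform_cycles:
  assumes \<alpha>: "\<alpha> permutes {0..<d * r}" and period: "\<forall>x<d * r. funpow_dist1 \<alpha> x x = d"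
    and "0 < d" "d mod 4 \<noteq> 2"
  shows "in_Par12 (d * r) \<alpha> \<alpha> \<alpha>"
proof -
  obtain L where L: "latin_square (d * r) L" "transpose_equivariant (d * r) (block_rotation d) L"
    using block_rotation_square_exists[OF assms(3,4)] by blast
  have "\<forall>x\<in>{0..<d * r}. funpow_dist1 \<alpha> x x = d" using period by simp
  from uniform_cycles_conjugate_block_rotation[OF \<alpha> _ this]
  obtain c where c: "bij_betw c {0..<d * r} {0..<d * r}"
    "\<forall>y<d * r. c (block_rotation d y) = \<alpha> (c y)"
    by auto
  have "\<forall>y<d * r. block_rotation d y < d * r" using block_rotation_less by blast
  from transpose_equivariant_conjugate[OF L this c] show ?thesis
    using in_Par12_iff_transpose_equivariant[OF \<alpha>] by blast
qed

theorem corollary4p12: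
  fixes d r n :: nat and \<alpha> :: "nat \<Rightarrow> nat"
  assumes "0 < d" and "0 < r" and "n = d * r"
    and "\<alpha> permutes {0..<n}"
    and "cycle_structure_uniform n \<alpha> d r"
  shows "in_Par12 n \<alpha> \<alpha> \<alpha> \<longleftrightarrow> d mod 4 \<noteq> 2"
proof -
  have perm: "permutation \<alpha>" using assms(4) by (auto intro: permutes_imp_permutation)
  have period: "\<forall>x<n. funpow_dist1 \<alpha> x x = d"
    using assms(5) card_orbit_eq_funpow_dist1[OF perm]
    by (simp add: cycle_structure_uniform_def orbit_altdef_permutation[OF perm])
  show ?thesis
  proof
    assume "in_Par12 n \<alpha> \<alpha> \<alpha>"
    then obtain L where "latin_square n L" "transpose_equivariant n \<alpha> L"
      using in_Par12_iff_transpose_equivariant[OF assms(4)] by blast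
    moreover have "0 < n" using assms(1-3) by simp
    ultimately show "d mod 4 \<noteq> 2"
      using not_transpose_equivariant_if_period_2_mod_4[OF assms(4) _ period] by blast
  qed (use in_Par12_if_uniform_cycles assms(1,3,4) period in blast)
qed

end
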